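(* Let $(C,\mathfrak p,\mathfrak d)$ be a regular $q$-cycle coalgebra with $\mathfrak p_{11}^1\ne0$. Then $\mathfrak d_{1r}^1=\mathfrak p_{1r}^1$ for all $r\in\{0,\dots,n-1\}$.
   Context: $K$ is an algebraically closed field of characteristic $0$ and $n\ge2$. $C$ is the coalgebra dual to $K[y]/\langle y^n\rangle$: basis $x_0,\dots,x_{n-1}$, $\Delta(x_i)=\sum_{j+k=i}x_j\otimes x_k$, $\epsilon(x_i)=\delta_{i0}$; $C\otimes C$ has the tensor product coalgebra structure; Sweedler notation $\Delta(b)=b_{(1)}\otimes b_{(2)}$. For linear maps $\mathfrak p,\mathfrak d\colon C\otimes C\to C$ write $a\cdot b=\mathfrak p(a\otimes b)$, $a:b=\mathfrak d(a\otimes b)$, $\mathfrak p(x_i\otimes x_j)=\sum_{k=0}^{n-1}\mathfrak p_{ij}^kx_k$, $\mathfrak d(x_i\otimes x_j)=\sum_{k=0}^{n-1}\mathfrak d_{ij}^kx_k$. A triple $(C,\mathfrak p,\mathfrak d)$ with $\mathfrak p,\mathfrak d$ coalgebra morphisms is a regular $q$-magma coalgebra if there are coalgebra morphisms $a\otimes b\mapsto a^b$, $a\otimes b\mapsto a_b$ from $C\otimes C$ to $C$ with $a^{b_{(1)}}\cdot b_{(2)}=(a\cdot b_{(1)})^{b_{(2)}}=\epsilon(b)a$ and $(a:b_{(2)})_{b_{(1)}}=a_{b_{(2)}}:b_{(1)}=\epsilon(b)a$. It is a regular $q$-cycle coalgebra if moreover for all $a,b,c$: (1) $(a\cdot b_{(1)})\cdot(c:b_{(2)})=(a\cdot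 c_{(2)})\cdot(b\cdot c_{(1)})$; (2) $(a\cdot b_{(1)}):(c\cdot b_{(2)})=(a:c_{(2)})\cdot(b:c_{(1)})$; (3) $(a:b_{(1)}):(c:b_{(2)})=(a:c_{(2)}):(b\cdot c_{(1)})$. *)

theory Defs
  imports "HOL-Computational_Algebra.Polynomial" "HOL-Library.Function_Algebras"
begin

definition alg_closed :: "'a::field itself \<Rightarrow> bool" where
  "alg_closed _ \<longleftrightarrow> (\<forall>q::'a poly. degree q > 0 \<longrightarrow> (\<exists>z. poly q z = 0))"

text \<open>Elements of C are coefficient vectors w.r.t. the basis x_0..x_(n-1)
  (functions nat => 'a, zero outside {0..<n}). A linear map f : C (x) C -> C
  is given by its structure constants F i j k, with f(x_i (x) x_j) = sum_k F i j k x_k.\<close>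

definition bvec :: "nat \<Rightarrow> nat \<Rightarrow> 'a::field" where
  "bvec i = (\<lambda>k. if k = i then 1 else 0)"

definition bil :: "nat \<Rightarrow> (nat \<Rightarrow> nat \<Rightarrow> nat \<Rightarrow> 'a::field) \<Rightarrow> (nat \<Rightarrow> 'a) \<Rightarrow> (nat \<Rightarrow> 'a) \<Rightarrow> (nat \<Rightarrow> 'a)" where
  "bil n F u v = (\<lambda>k. if k < n then (\<Sum>i<n. \<Sum>j<n. u i * v j * F i j k) else 0)"

text \<open>f is a coalgebra morphism C (x) C -> C (tensor product coalgebra structure on C (x) C),
  written out on basis elements: Delta(f(x_i (x) x_j)) = (f (x) f)(Delta(x_i (x) x_j))
  and eps(f(x_i (x) x_j)) = eps(x_i) eps(x_j).\<close>
definition coalg_mor :: "nat \<Rightarrow> (nat \<Rightarrow> nat \<Rightarrow> nat \<Rightarrow> 'a::field) \<Rightarrow> bool" where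
  "coalg_mor n F \<longleftrightarrow>
     (\<forall>i<n. \<forall>j<n. \<forall>k<n. \<forall>m<n.
        (if k + m < n then F i j (k + m) else 0) =
        (\<Sum>a\<le>i. \<Sum>c\<le>j. F a c k * F (i - a) (j - c) m)) \<and>
     (\<forall>i<n. \<forall>j<n. F i j 0 = (if i = 0 \<and> j = 0 then 1 else 0))"

text \<open>Regular q-magma coalgebra: p, d coalgebra morphisms, and there exist coalgebra
  morphisms U (a (x) b |-> a^b) and L (a (x) b |-> a_b) satisfying the axioms, stated for
  basis elements a = x_i, b = x_j (the identities are linear in a and b);
  Delta(x_j) = sum_(s+t=j) x_s (x) x_t, eps(x_j) = delta_(j0).\<close>
definition reg_qmagma :: "nat \<Rightarrow> (nat \<Rightarrow> nat \<Rightarrow> nat \<Rightarrow> 'a::field) \<Rightarrow> (nat \<Rightarrow> nat \<Rightarrow> nat \<Rightarrow> 'a) \<Rightarrow> bool" where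
  "reg_qmagma n P D \<longleftrightarrow> coalg_mor n P \<and> coalg_mor n D \<and>
    (\<exists>U L. coalg_mor n U \<and> coalg_mor n L \<and>
      (\<forall>i<n. \<forall>j<n.
         (\<Sum>s\<le>j. bil n P (bil n U (bvec i) (bvec s)) (bvec (j - s)))
           = (if j = 0 then bvec i else (\<lambda>_. 0)) \<and>
         (\<Sum>s\<le>j. bil n U (bil n P (bvec i) (bvec s)) (bvec (j - s)))
           = (if j = 0 then bvec i else (\<lambda>_. 0)) \<and>
         (\<Sum>s\<le>j. bil n L (bil n D (bvec i) (bvec (j - s))) (bvec s))
           = (if j = 0 then bvec i else (\<lambda>_. 0)) \<and>
         (\<Sum>s\<le>j. bil n D (bil n L (bvec i) (bvec (j - s))) (bvec s))
           = (if j = 0 then bvec i else (\<lambda>_. 0))))"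

text \<open>Regular q-cycle coalgebra: identities (1)-(3) for basis elements a = x_i, b = x_j, c = x_l
  (the identities are trilinear in a, b, c). In each sum, b_(1) = x_s, b_(2) = x_(j-s),
  resp. c_(1) = x_s, c_(2) = x_(l-s).\<close>
definition reg_qcycle :: "nat \<Rightarrow> (nat \<Rightarrow> nat \<Rightarrow> nat \<Rightarrow> 'a::field) \<Rightarrow> (nat \<Rightarrow> nat \<Rightarrow> nat \<Rightarrow> 'a) \<Rightarrow> bool" where
  "reg_qcycle n P D \<longleftrightarrow> reg_qmagma n P D \<and>
    (\<forall>i<n. \<forall>j<n. \<forall>l<n.
       (\<Sum>s\<le>j. bil n P (bil n P (bvec i) (bvec s)) (bil n D (bvec l) (bvec (j - s))))
         = (\<Sum>s\<le>l. bil n P (bil n P (bvec i) (bvec (l - s))) (bil n P (bvec j) (bvec s))) \<and>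
       (\<Sum>s\<le>j. bil n D (bil n P (bvec i) (bvec s)) (bil n P (bvec l) (bvec (j - s))))
         = (\<Sum>s\<le>l. bil n P (bil n D (bvec i) (bvec (l - s))) (bil n D (bvec j) (bvec s))) \<and>
       (\<Sum>s\<le>j. bil n D (bil n D (bvec i) (bvec s)) (bil n D (bvec l) (bvec (j - s))))
         = (\<Sum>s\<le>l. bil n D (bil n D (bvec i) (bvec (l - s))) (bil n P (bvec j) (bvec s))))"

end

theory Submission
  imports Defs "HOL-Computational_Algebra.Formal_Power_Series"
begin

text \<open>Dually, a coalgebra morphism \<open>C \<otimes> C \<rightarrow> C\<close> is a substitution \<open>y \<mapsto> \<phi>(u,v)\<close> into
  \<open>K[u,v]/(u\<^sup>n,v\<^sup>n)\<close> with \<open>\<phi>\<^sup>n = 0\<close>. Regularity makes the coefficient of \<open>u\<close> in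
  \<open>\<phi>\<^sub>p\<close> and \<open>\<phi>\<^sub>d\<close> nonzero; in characteristic 0 the vanishing of \<open>\<phi>\<^sup>n\<close> then
  forces \<open>\<phi>(0,v) = 0\<close>, and identity (1) with \<open>c = x\<^sub>0\<close> forces \<open>\<phi>\<^sub>p(u,0) = u\<close>.
  Taking \<open>a = x\<^sub>1\<close> in identities (1) and (3) and reading off the coordinate of \<open>x\<^sub>1\<close>, the series
  \<open>F = \<Sum> p\<^sup>1\<^sub>1\<^sub>r t\<^sup>r\<close>, \<open>H = \<Sum> d\<^sup>1\<^sub>1\<^sub>r t\<^sup>r\<close> and \<open>E = \<Sum> p\<^sup>1\<^sub>r\<^sub>1 t\<^sup>r = l t + \<dots>\<close>,
  \<open>l = p\<^sup>1\<^sub>1\<^sub>1\<close>, satisfy \<open>l F H = l F + F' E\<close> and \<open>l H H = l H + H' E\<close>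
  modulo \<open>t\<^sup>n\<close>, and these congruences force \<open>F = H\<close> modulo \<open>t\<^sup>n\<close>.\<close>

unbundle fps_syntax

lemma sum_eq_single:
  "finite A \<Longrightarrow> a \<in> A \<Longrightarrow> (\<And>x. x \<in> A \<Longrightarrow> x \<noteq> a \<Longrightarrow> f x = 0) \<Longrightarrow> sum f A = f a"
  by (subst sum.remove[of A a]) (auto intro: sum.neutral)

lemma sum_apply: "(\<Sum>a\<in>A. f a) x = (\<Sum>a\<in>A. f a x)"
  by (induction A rule: infinite_finite_induct) auto

lemma sum_atMost_1: "(\<Sum>c\<le>(1::nat). g c) = g 0 + g 1"
  by (simp add: atMost_Suc add.commute)

lemma mult_if_1_0: "(x::'a::semiring_1) * (if P then 1 else 0) = (if P then x else 0)"
  by simp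

lemma if_0_mult: "(if P then x else 0) * (y::'a::semiring_1) = (if P then x * y else 0)"
  by simp

lemma bil_bvec:
  "i < n \<Longrightarrow> j < n \<Longrightarrow> bil n F (bvec i) (bvec j) = (\<lambda>k. if k < n then F i j k else 0)"
  unfolding bil_def bvec_def
  by (simp add: if_0_mult mult_if_1_0 if_distrib[of "\<lambda>x. x * _"] cong: if_cong)

lemma bil_bil_bvec_apply:
  "k < n \<Longrightarrow> i < n \<Longrightarrow> s < n \<Longrightarrow> t < n \<Longrightarrow>
    bil n F (bil n G (bvec i) (bvec s)) (bvec t) k = (\<Sum>a<n. G i s a * F a t k)"
  by (simp add: bil_bvec) (simp add: bil_def bvec_def mult_if_1_0 if_0_mult)

lemma bil_bil_bil_apply:
  "k < n \<Longrightarrow> i < n \<Longrightarrow> s < n \<Longrightarrow> l < n \<Longrightarrow> t < n \<Longrightarrow>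
    bil n F (bil n G (bvec i) (bvec s)) (bil n H (bvec l) (bvec t)) k
      = (\<Sum>a<n. \<Sum>c<n. G i s a * H l t c * F a c k)"
  by (simp add: bil_bvec) (simp add: bil_def)

definition series_1r :: "(nat \<Rightarrow> nat \<Rightarrow> nat \<Rightarrow> 'a) \<Rightarrow> 'a fps" where
  "series_1r F = Abs_fps (\<lambda>r. F 1 r 1)"

definition series_r1 :: "(nat \<Rightarrow> nat \<Rightarrow> nat \<Rightarrow> 'a) \<Rightarrow> 'a fps" where
  "series_r1 F = Abs_fps (\<lambda>r. F r 1 1)"

section \<open>Structure constants of a coalgebra morphism\<close>

text \<open>A coalgebra morphism \<open>C \<otimes> C \<rightarrow> C\<close> is dual to the algebra map
  \<open>K[y]/(y\<^sup>n) \<rightarrow> K[u,v]/(u\<^sup>n,v\<^sup>n)\<close> sending \<open>y\<close> to some \<open>\<phi>(u,v)\<close>,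
  and \<open>F i j k\<close> is the coefficient of \<open>u\<^sup>i v\<^sup>j\<close> in \<open>\<phi>\<^sup>k\<close>.\<close>

locale coalg_morphism =
  fixes n :: nat and F :: "nat \<Rightarrow> nat \<Rightarrow> nat \<Rightarrow> 'a::field_char_0"
  assumes coalg_mor: "coalg_mor n F" and two_le_n: "2 \<le> n"
begin

lemma coeff_counit: "i < n \<Longrightarrow> j < n \<Longrightarrow> F i j 0 = (if i = 0 \<and> j = 0 then 1 else 0)"
  using coalg_mor unfolding coalg_mor_def by blast

lemma coeff_convolution:
  assumes "i < n" "j < n" "k < n" "m < n"
  shows "(if k + m < n then F i j (k + m) else 0) = (\<Sum>a\<le>i. \<Sum>c\<le>j. F a c k * F (i - a) (j - c) m)"
  using coalg_mor assms unfolding coalg_mor_def by blast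

lemma coeff_Suc:
  "Suc k < n \<Longrightarrow> i < n \<Longrightarrow> j < n \<Longrightarrow>
    F i j (Suc k) = (\<Sum>a\<le>i. \<Sum>c\<le>j. F a c 1 * F (i - a) (j - c) k)"
  using coeff_convolution[of i j 1 k] by simp

lemma coeff_0_0_1: "F 0 0 1 = 0"
proof -
  have power: "F 0 0 k = F 0 0 1 ^ k" if "k < n" for k
    using that
  proof (induction k)
    case 0
    then show ?case using coeff_counit by simp
  next
    case (Suc k)
    then show ?case using coeff_Suc[of k 0 0] two_le_n by simp
  qed
  have "F 0 0 1 * F 0 0 (n - 1) = 0"
    using coeff_convolution[of 0 0 1 "n - 1"] two_le_n by simp
  then have "F 0 0 1 ^ Suc (n - 1) = 0"
    using power[of "n - 1"] two_le_n by simp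
  then show ?thesis by auto
qed

lemma coeff_eq_0_if_v_order:
  assumes low: "\<forall>c<m. F 0 c 1 = 0"
  shows "a < n \<Longrightarrow> c < n \<Longrightarrow> k < n \<Longrightarrow> c < m * (k - a) \<Longrightarrow> F a c k = 0"
proof (induction k arbitrary: a c)
  case 0
  then show ?case by simp
next
  case (Suc k)
  have "a \<le> k" using Suc.prems(4) by (cases "a \<le> k") auto
  have "F a c (Suc k) = (\<Sum>a1\<le>a. \<Sum>c1\<le>c. F a1 c1 1 * F (a - a1) (c - c1) k)"
    using coeff_Suc Suc.prems by simp
  also have "\<dots> = 0"
  proof (intro sum.neutral ballI)
    fix a1 c1 assume a1: "a1 \<in> {..a}" and c1: "c1 \<in> {..c}"
    show "F a1 c1 1 * F (a - a1) (c - c1) k = 0"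
    proof (cases "a1 = 0 \<and> c1 < m")
      case True
      then show ?thesis using low by simp
    next
      case False
      have "c - c1 < m * (k - (a - a1))"
      proof (cases "a1 = 0")
        case True
        have "m * (Suc k - a) = m * (k - a) + m" using \<open>a \<le> k\<close> by (simp add: Suc_diff_le)
        then show ?thesis using Suc.prems(4) False True c1 by auto
      next
        case False
        have "Suc k - a \<le> k - (a - a1)" using False a1 \<open>a \<le> k\<close> by auto
        then have "m * (Suc k - a) \<le> m * (k - (a - a1))" by (rule mult_le_mono2)
        then show ?thesis using Suc.prems(4) by linarith
      qed
      then have "F (a - a1) (c - c1) k = 0" using Suc by auto
      then show ?thesis by simp
    qed
  qed
  finally show ?case .
qed

lemma coeff_eq_0_below_degree: "i < n \<Longrightarrow> j < n \<Longrightarrow> k < n \<Longrightarrow> i + j < k \<Longrightarrow> F i j k = 0"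
  using coeff_eq_0_if_v_order[of 1] coeff_0_0_1 by simp

lemma coeff_k_0_k: "k < n \<Longrightarrow> F k 0 k = F 1 0 1 ^ k"
proof (induction k)
  case 0
  then show ?case using coeff_counit by simp
next
  case (Suc k)
  have "F (Suc k) 0 (Suc k) = (\<Sum>a\<le>Suc k. F a 0 1 * F (Suc k - a) 0 k)"
    using coeff_Suc[of k "Suc k" 0] Suc.prems two_le_n by simp
  also have "\<dots> = F 1 0 1 * F k 0 k"
  proof (subst sum_eq_single[where a = 1])
    fix a assume "a \<in> {..Suc k}" "a \<noteq> 1"
    then show "F a 0 1 * F (Suc k - a) 0 k = 0"
      using coeff_0_0_1 coeff_eq_0_below_degree[of "Suc k - a" 0 k] Suc.prems
      by (cases "a = 0") auto
  qed auto
  finally show ?case using Suc by simp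
qed

lemma sum_coeff_1_0: "(\<Sum>c<n. F 1 0 c * X c) = F 1 0 1 * X 1"
proof (rule sum_eq_single)
  fix c assume "c \<in> {..<n}" "c \<noteq> 1"
  then show "F 1 0 c * X c = 0"
    using coeff_counit coeff_eq_0_below_degree[of 1 0 c] two_le_n by (cases "c = 0") auto
qed (use two_le_n in auto)

lemma coeff_1_0_1_mult_eq_1:
  assumes "bil n G (bil n F (bvec 1) (bvec 0)) (bvec 0) = bvec 1"
  shows "F 1 0 1 * G 1 0 1 = 1"
proof -
  have "bil n G (bil n F (bvec 1) (bvec 0)) (bvec 0) 1 = 1"
    using assms by (simp add: bvec_def)
  moreover have "bil n G (bil n F (bvec 1) (bvec 0)) (bvec 0) 1 = (\<Sum>a<n. F 1 0 a * G a 0 1)"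
    using two_le_n by (simp add: bil_bil_bvec_apply)
  ultimately show ?thesis using sum_coeff_1_0 by simp
qed

text \<open>The coefficient of \<open>u\<^sup>k v\<^sup>m\<close> in \<open>\<phi> \<phi>\<^sup>k\<close>; unlike \<open>F k m (k + 1)\<close> it
  makes sense also for \<open>k + 1 = n\<close>.\<close>

lemma convolution_coeff_k_m:
  assumes low: "\<forall>c<m. F 0 c 1 = 0" and "1 \<le> m" "m < n"
  shows "k < n \<Longrightarrow>
    (\<Sum>a\<le>k. \<Sum>c\<le>m. F a c 1 * F (k - a) (m - c) k) = of_nat (Suc k) * F 1 0 1 ^ k * F 0 m 1"
proof (induction k)
  case 0
  have "(\<Sum>c\<le>m. F 0 c 1 * F 0 (m - c) 0) = F 0 m 1 * F 0 (m - m) 0"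
    by (rule sum_eq_single) (use low in auto)
  then show ?case using coeff_counit \<open>m < n\<close> by simp
next
  case (Suc k)
  define X where "X a = (\<Sum>c\<le>m. F a c 1 * F (Suc k - a) (m - c) (Suc k))" for a
  have vanish: "F a c (Suc k) = 0" if "a < n" "c < n" "c < m * (Suc k - a)" for a c
    using coeff_eq_0_if_v_order[OF low] that Suc.prems by blast
  have "(\<Sum>a\<le>Suc k. X a) = (\<Sum>a\<in>{0, 1}. X a)"
  proof (rule sum.mono_neutral_right)
    show "\<forall>a\<in>{..Suc k} - {0, 1}. X a = 0"
    proof (intro ballI)
      fix a assume a: "a \<in> {..Suc k} - {0, 1}"
      have "F (Suc k - a) (m - c) (Suc k) = 0" if "c \<le> m" for c
      proof (rule vanish)
        have "m * 2 \<le> m * (Suc k - (Suc k - a))" using a by (intro mult_le_mono2) auto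
        then show "m - c < m * (Suc k - (Suc k - a))" using \<open>1 \<le> m\<close> by linarith
      qed (use Suc.prems \<open>m < n\<close> in auto)
      then show "X a = 0" by (simp add: X_def)
    qed
  qed auto
  moreover have "X 0 = F 0 m 1 * F (Suc k) 0 (Suc k)"
    unfolding X_def by (subst sum_eq_single[where a = m]) (use low in auto)
  moreover have "X 1 = F 1 0 1 * F k m (Suc k)"
  proof -
    have "F 1 c 1 * F k (m - c) (Suc k) = 0" if "c \<le> m" "c \<noteq> 0" for c
      using vanish[of k "m - c"] that Suc.prems \<open>m < n\<close> by simp
    then show ?thesis unfolding X_def by (subst sum_eq_single[where a = 0]) auto
  qed
  moreover have "F k m (Suc k) = of_nat (Suc k) * F 1 0 1 ^ k * F 0 m 1"
    using Suc coeff_Suc[of k k m] \<open>m < n\<close> by simp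
  ultimately show ?case
    using coeff_k_0_k[of "Suc k"] Suc.prems by (simp add: X_def algebra_simps)
qed

text \<open>Characteristic 0 enters here: if \<open>m > 0\<close> is the least index with \<open>F 0 m 1 \<noteq> 0\<close>,
  the coefficient of \<open>u\<^sup>n\<^sup>-\<^sup>1 v\<^sup>m\<close> in \<open>\<phi>\<^sup>n = 0\<close> would be
  \<open>n (F 1 0 1)\<^sup>n\<^sup>-\<^sup>1 F 0 m 1\<close>.\<close>

lemma coeff_0_j_1_eq_0:
  assumes "F 1 0 1 \<noteq> 0"
  shows "j < n \<Longrightarrow> F 0 j 1 = 0"
proof (induction j rule: less_induct)
  case (less m)
  show ?case
  proof (cases "m = 0")
    case True
    then show ?thesis using coeff_0_0_1 by simp
  next
    case False
    have "of_nat (Suc (n - 1)) * F 1 0 1 ^ (n - 1) * F 0 m 1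
        = (\<Sum>a\<le>n - 1. \<Sum>c\<le>m. F a c 1 * F (n - 1 - a) (m - c) (n - 1))"
      using convolution_coeff_k_m[of m "n - 1"] less False two_le_n by simp
    also have "\<dots> = 0"
      using coeff_convolution[of "n - 1" m 1 "n - 1"] less.prems two_le_n by simp
    finally have "of_nat n * F 1 0 1 ^ (n - 1) * F 0 m 1 = 0"
      using two_le_n by simp
    then show ?thesis using assms two_le_n by simp
  qed
qed

lemma coeff_eq_0_if_lt:
  assumes "F 1 0 1 \<noteq> 0" "a < n" "c < n" "k < n" "a < k"
  shows "F a c k = 0"
proof (rule coeff_eq_0_if_v_order[of n])
  show "\<forall>c<n. F 0 c 1 = 0" using coeff_0_j_1_eq_0[OF assms(1)] by blast
  have "n \<le> n * (k - a)" using \<open>a < k\<close> by auto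
  then show "c < n * (k - a)" using \<open>c < n\<close> by linarith
qed (use assms in auto)

lemma sum_coeff_0_j:
  assumes "F 1 0 1 \<noteq> 0" "j < n"
  shows "(\<Sum>c<n. F 0 j c * X c) = (if j = 0 then X 0 else 0)"
proof -
  have "(\<Sum>c<n. F 0 j c * X c) = F 0 j 0 * X 0"
    by (rule sum_eq_single) (use coeff_eq_0_if_lt[OF assms(1)] assms(2) two_le_n in auto)
  then show ?thesis using coeff_counit assms(2) two_le_n by simp
qed

lemma sum_coeff_1_j:
  assumes "F 1 0 1 \<noteq> 0" "j < n"
  shows "(\<Sum>c<n. F 1 j c * X c) = F 1 j 1 * X 1"
proof (rule sum_eq_single)
  fix c assume "c \<in> {..<n}" "c \<noteq> 1"
  then show "F 1 j c * X c = 0"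
    using coeff_counit coeff_eq_0_if_lt[OF assms(1), of 1 j c] assms(2) two_le_n
    by (cases "c = 0") auto
qed (use two_le_n in auto)

lemma bil_bil_apply_1:
  assumes "F 1 0 1 \<noteq> 0" "s < n" "l < n" "t < n"
  shows "bil n F (bil n F (bvec 1) (bvec s)) (bil n G (bvec l) (bvec t)) 1
    = F 1 s 1 * (\<Sum>c<n. G l t c * F 1 c 1)"
proof -
  have "bil n F (bil n F (bvec 1) (bvec s)) (bil n G (bvec l) (bvec t)) 1
      = (\<Sum>a<n. F 1 s a * (\<Sum>c<n. G l t c * F a c 1))"
    using assms two_le_n by (simp add: bil_bil_bil_apply sum_distrib_left mult.assoc)
  also have "\<dots> = F 1 s 1 * (\<Sum>c<n. G l t c * F 1 c 1)"
    using sum_coeff_1_j[OF assms(1,2)] .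
  finally show ?thesis .
qed

lemma coeff_j_0_Suc_if_linear_below:
  assumes below: "\<forall>j<m. F j 0 1 = (if j = 1 then 1 else 0)" and "2 \<le> m"
  shows "Suc k < n \<Longrightarrow> j < n \<Longrightarrow> j < m + k \<Longrightarrow> F j 0 (Suc k) = (if j = Suc k then 1 else 0)"
proof (induction k arbitrary: j)
  case 0
  then show ?case using below by simp
next
  case (Suc k)
  have expand: "F j 0 (Suc (Suc k)) = (\<Sum>a\<le>j. F a 0 1 * F (j - a) 0 (Suc k))"
    using coeff_Suc[of "Suc k" j 0] Suc.prems two_le_n by simp
  show ?case
  proof (cases "j = 0")
    case True
    then show ?thesis using expand coeff_0_0_1 by simp
  next
    case False
    have "(\<Sum>a\<le>j. F a 0 1 * F (j - a) 0 (Suc k)) = F 1 0 1 * F (j - 1) 0 (Suc k)"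
    proof (rule sum_eq_single)
      fix a assume a: "a \<in> {..j}" "a \<noteq> 1"
      show "F a 0 1 * F (j - a) 0 (Suc k) = 0"
      proof (cases "a < m")
        case True
        then show ?thesis using below a by simp
      next
        case False
        then have "F (j - a) 0 (Suc k) = 0"
          using Suc.prems a by (intro coeff_eq_0_below_degree) auto
        then show ?thesis by simp
      qed
    qed (use False in auto)
    moreover have "F 1 0 1 = 1" using below \<open>2 \<le> m\<close> by simp
    moreover have "F (j - 1) 0 (Suc k) = (if j - 1 = Suc k then 1 else 0)"
    proof -
      have "j - 1 < n" "j - 1 < m + k" using Suc.prems False by auto
      then show ?thesis using Suc.IH Suc.prems by simp
    qed
    ultimately show ?thesis using expand False by auto
  qed
qed

lemma coeff_1_0_1_eq_1_if_fixed:
  assumes "f 1 \<noteq> 0" and fixed: "\<forall>j<n. f j = (\<Sum>c<n. F j 0 c * f c)"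
  shows "F 1 0 1 = 1"
proof -
  have "f 1 = F 1 0 1 * f 1" using fixed sum_coeff_1_0[of f] two_le_n by simp
  then show ?thesis using \<open>f 1 \<noteq> 0\<close> by simp
qed

lemma coeff_j_0_1_if_fixed:
  assumes "f 1 \<noteq> 0" and fixed: "\<forall>j<n. f j = (\<Sum>c<n. F j 0 c * f c)"
  shows "j < n \<Longrightarrow> F j 0 1 = (if j = 1 then 1 else 0)"
proof (induction j rule: less_induct)
  case (less j)
  consider "j = 0" | "j = 1" | "2 \<le> j" by linarith
  then show ?case
  proof cases
    case 1
    then show ?thesis using coeff_0_0_1 by simp
  next
    case 2
    then show ?thesis using coeff_1_0_1_eq_1_if_fixed[OF assms] by simp
  next
    case 3
    have below: "\<forall>i<j. F i 0 1 = (if i = 1 then 1 else 0)" using less by auto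
    have row: "F j 0 c = (if c = j then 1 else 0)" if "c < n" "2 \<le> c" for c
      using coeff_j_0_Suc_if_linear_below[OF below 3, of "c - 1" j] that less.prems
        coeff_eq_0_below_degree[of j 0 c]
      by (cases "c \<le> j") auto
    have "(\<Sum>c<n. F j 0 c * f c) = (\<Sum>c\<in>{1, j}. F j 0 c * f c)"
    proof (rule sum.mono_neutral_right)
      show "\<forall>c\<in>{..<n} - {1, j}. F j 0 c * f c = 0"
      proof
        fix c assume "c \<in> {..<n} - {1, j}"
        then show "F j 0 c * f c = 0"
          using less.prems 3 row coeff_counit by (cases "c = 0") auto
      qed
    qed (use less.prems two_le_n in auto)
    also have "\<dots> = F j 0 1 * f 1 + f j"
      using row[of j] 3 less.prems by simp
    finally have "f j = F j 0 1 * f 1 + f j" using fixed less.prems by simp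
    then show ?thesis using \<open>f 1 \<noteq> 0\<close> 3 by simp
  qed
qed

context
  assumes row: "\<And>j. j < n \<Longrightarrow> F j 0 1 = (if j = 1 then 1 else 0)"
begin

lemma coeff_j_0_k: "j < n \<Longrightarrow> k < n \<Longrightarrow> F j 0 k = (if j = k then 1 else 0)"
  using coeff_counit coeff_j_0_Suc_if_linear_below[OF _ two_le_n, of "k - 1" j] row
  by (cases k) auto

lemma sum_coeff_j_0:
  assumes "j < n"
  shows "(\<Sum>c<n. F j 0 c * X c) = X j"
  using sum_eq_single[of "{..<n}" j "\<lambda>c. F j 0 c * X c"] coeff_j_0_k \<open>j < n\<close> by auto

lemma coeff_j_1_Suc:
  assumes "Suc c < n" "j < n"
  shows "F j 1 (Suc c) = (if 1 \<le> j then F (j - 1) 1 c else 0) + (if c \<le> j then F (j - c) 1 1 else 0)"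
proof -
  have "F j 1 (Suc c) = (\<Sum>a\<le>j. F a 0 1 * F (j - a) 1 c) + (\<Sum>a\<le>j. F a 1 1 * F (j - a) 0 c)"
    using coeff_Suc[of c j 1] assms two_le_n by (simp add: sum_atMost_1 sum.distrib)
  moreover have "(\<Sum>a\<le>j. F a 0 1 * F (j - a) 1 c) = (\<Sum>a\<le>j. if a = 1 then F (j - 1) 1 c else 0)"
    by (rule sum.cong) (use row assms in auto)
  moreover have "(\<Sum>a\<le>j. F a 1 1 * F (j - a) 0 c)
      = (\<Sum>a\<le>j. if a = j - c then (if c \<le> j then F a 1 1 else 0) else 0)"
    by (rule sum.cong) (use coeff_j_0_k assms in auto)
  ultimately show ?thesis by simp
qed

lemma coeff_j_1_k:
  "k < n \<Longrightarrow> j < n \<Longrightarrow>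
    F j 1 k = (if 1 \<le> k \<and> k \<le> Suc j then of_nat k * F (Suc j - k) 1 1 else 0)"
proof (induction k arbitrary: j)
  case 0
  then show ?case using coeff_counit two_le_n by simp
next
  case (Suc c)
  have step: "F j 1 (Suc c) = (if 1 \<le> j then F (j - 1) 1 c else 0) + (if c \<le> j then F (j - c) 1 1 else 0)"
    using coeff_j_1_Suc[OF Suc.prems] .
  show ?case
  proof (cases "j = 0")
    case True
    then show ?thesis using step by simp
  next
    case False
    have "F (j - 1) 1 c = (if 1 \<le> c \<and> c \<le> j then of_nat c * F (j - c) 1 1 else 0)"
      using Suc.IH[of "j - 1"] Suc.prems False by simp
    then show ?thesis using step False coeff_counit[of "j - 1" 1] Suc.prems two_le_n
      by (cases "c = 0") (auto simp: algebra_simps)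
  qed
qed

lemma sum_coeff_j_1:
  assumes "j < n"
  shows "(\<Sum>c<n. F j 1 c * X c) = (fps_deriv (Abs_fps X) * series_r1 F) $ j"
proof -
  define G where "G c = of_nat c * X c * F (Suc j - c) 1 1" for c
  have "F 0 1 1 = 0" using coeff_0_j_1_eq_0[of 1] row[of 1] two_le_n by simp
  then have "G (Suc j) = 0" by (simp add: G_def)
  have "F j 1 c * X c = (if c \<le> j then G c else 0)" if "c < n" for c
  proof -
    have "F j 1 c = (if 1 \<le> c \<and> c \<le> Suc j then of_nat c * F (Suc j - c) 1 1 else 0)"
      using coeff_j_1_k[OF that \<open>j < n\<close>] .
    then show ?thesis using \<open>G (Suc j) = 0\<close> by (cases "c = Suc j") (auto simp: G_def)
  qed
  then have "(\<Sum>c<n. F j 1 c * X c) = (\<Sum>c<n. if c \<le> j then G c else 0)"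
    by (intro sum.cong) auto
  also have "\<dots> = (\<Sum>c\<le>j. G c)"
    by (rule sum.mono_neutral_cong_right) (use \<open>j < n\<close> in auto)
  also have "\<dots> = (\<Sum>c\<le>Suc j. G c)" using \<open>G (Suc j) = 0\<close> by simp
  also have "\<dots> = (fps_deriv (Abs_fps X) * series_r1 F) $ j"
    unfolding sum.atMost_Suc_shift by (simp add: fps_mult_nth series_r1_def G_def atLeast0AtMost)
  finally show ?thesis .
qed

end

end

section \<open>Formal power series\<close>

lemma fps_mult_nth_eq_0: "(\<forall>i\<le>j. f $ i = 0) \<Longrightarrow> (f * g :: 'a::semiring_0 fps) $ j = 0"
  by (simp add: fps_mult_nth)

lemma fps_nth_eq_0_if_mult_nth_eq_0:
  fixes E W :: "'a::field fps"
  assumes "E $ 0 = 0" "E $ 1 \<noteq> 0" and EW: "\<forall>j<n. (E * W) $ j = 0"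
  shows "Suc i < n \<Longrightarrow> W $ i = 0"
proof (induction i rule: less_induct)
  case (less i)
  have "(E * W) $ Suc i = (\<Sum>t=0..Suc i. E $ t * W $ (Suc i - t))"
    by (simp add: fps_mult_nth)
  also have "\<dots> = E $ 1 * W $ (Suc i - 1)"
  proof (rule sum_eq_single)
    fix t assume t: "t \<in> {0..Suc i}" "t \<noteq> 1"
    show "E $ t * W $ (Suc i - t) = 0"
    proof (cases "t = 0")
      case True
      then show ?thesis using assms(1) by simp
    next
      case False
      then have "W $ (Suc i - t) = 0" using t less by (intro less.IH) auto
      then show ?thesis by simp
    qed
  qed auto
  finally have "E $ 1 * W $ i = 0" using EW less.prems by simp
  then show ?case using assms(2) by simp
qed

lemma fps_nth_eq_0_if_wronskian_nth_eq_0: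
  fixes u H :: "'a::field_char_0 fps"
  assumes "u $ 0 = 0" "H $ 0 \<noteq> 0"
    and wronskian: "\<forall>i. Suc i < n \<longrightarrow> (fps_deriv u * H - fps_deriv H * u) $ i = 0"
  shows "t < n \<Longrightarrow> u $ t = 0"
proof (induction t rule: less_induct)
  case (less t)
  show ?case
  proof (cases t)
    case 0
    then show ?thesis using assms(1) by simp
  next
    case (Suc s)
    have "(fps_deriv H * u) $ s = 0"
      unfolding fps_mult_nth by (rule sum.neutral) (use less Suc in auto)
    moreover have "(fps_deriv u * H) $ s = fps_deriv u $ s * H $ (s - s)"
      unfolding fps_mult_nth by (rule sum_eq_single) (use less Suc in auto)
    ultimately have "of_nat (Suc s) * u $ Suc s * H $ 0 = 0"
      using wronskian less.prems Suc by simp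
    then show ?thesis using Suc assms(2) by (simp del: of_nat_Suc)
  qed
qed

text \<open>Both \<open>F\<close> and \<open>H\<close> solve \<open>Y' E = l Y (H - 1)\<close> modulo \<open>t\<^sup>n\<close>, where \<open>l = E $ 1\<close>.
  As \<open>E = l t + \<dots>\<close>, the Wronskian \<open>F' H - H' F\<close> vanishes modulo \<open>t\<^sup>n\<^sup>-\<^sup>1\<close>, so \<open>F / H\<close>
  is constant modulo \<open>t\<^sup>n\<close>.\<close>

lemma fps_nth_eq_if_riccati_congruent:
  fixes F H E :: "'a::field_char_0 fps"
  assumes "F $ 0 = 1" "H $ 0 = 1" "E $ 0 = 0" "E $ 1 \<noteq> 0"
    and F: "\<forall>j<n. E $ 1 * (F * H) $ j = E $ 1 * F $ j + (fps_deriv F * E) $ j"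
    and H: "\<forall>j<n. E $ 1 * (H * H) $ j = E $ 1 * H $ j + (fps_deriv H * E) $ j"
  shows "t < n \<Longrightarrow> F $ t = H $ t"
proof -
  define A where "A = fps_deriv F * E - fps_const (E $ 1) * (F * H - F)"
  define B where "B = fps_deriv H * E - fps_const (E $ 1) * (H * H - H)"
  have "A $ j = 0" "B $ j = 0" if "j < n" for j
    using F H that unfolding A_def B_def
    by (simp_all only: fps_sub_nth fps_mult_left_const_nth) (simp_all add: algebra_simps)
  moreover have "E * (fps_deriv (F - H) * H - fps_deriv H * (F - H)) = A * H - B * F"
    unfolding A_def B_def by (simp add: algebra_simps)
  ultimately have "\<forall>j<n. (E * (fps_deriv (F - H) * H - fps_deriv H * (F - H))) $ j = 0"
    by (simp add: fps_mult_nth_eq_0)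
  then have "\<forall>i. Suc i < n \<longrightarrow> (fps_deriv (F - H) * H - fps_deriv H * (F - H)) $ i = 0"
    using fps_nth_eq_0_if_mult_nth_eq_0[OF assms(3,4)] by blast
  then show "t < n \<Longrightarrow> F $ t = H $ t"
    using fps_nth_eq_0_if_wronskian_nth_eq_0[of "F - H" H n t] assms(1,2) by simp
qed

section \<open>Regular q-cycle coalgebras\<close>

locale reg_qcycle_coalgebra =
  fixes n :: nat and P D :: "nat \<Rightarrow> nat \<Rightarrow> nat \<Rightarrow> 'a::field_char_0"
  assumes reg_qcycle: "reg_qcycle n P D" and two_le_n: "2 \<le> n"
begin

lemma reg_qmagma: "reg_qmagma n P D"
  using reg_qcycle unfolding reg_qcycle_def by blast

sublocale P: coalg_morphism n P
  using reg_qmagma two_le_n unfolding reg_qmagma_def by unfold_locales auto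

sublocale D: coalg_morphism n D
  using reg_qmagma two_le_n unfolding reg_qmagma_def by unfold_locales auto

lemma coeff_1_0_1_ne_0: "P 1 0 1 \<noteq> 0" "D 1 0 1 \<noteq> 0"
proof -
  obtain U L where "coalg_mor n U" and inverse: "\<forall>i<n. \<forall>j<n.
      (\<Sum>s\<le>j. bil n P (bil n U (bvec i) (bvec s)) (bvec (j - s))) = (if j = 0 then bvec i else (\<lambda>_. 0)) \<and>
      (\<Sum>s\<le>j. bil n L (bil n D (bvec i) (bvec (j - s))) (bvec s)) = (if j = 0 then bvec i else (\<lambda>_. 0))"
    using reg_qmagma unfolding reg_qmagma_def by blast
  interpret U: coalg_morphism n U by unfold_locales (use \<open>coalg_mor n U\<close> two_le_n in auto)
  have "1 < n" "0 < n" using two_le_n by auto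
  then have "bil n P (bil n U (bvec 1) (bvec 0)) (bvec 0) = bvec 1"
    and "bil n L (bil n D (bvec 1) (bvec 0)) (bvec 0) = bvec 1"
    using inverse[rule_format, OF \<open>1 < n\<close> \<open>0 < n\<close>] by simp_all
  then have "U 1 0 1 * P 1 0 1 = 1" "D 1 0 1 * L 1 0 1 = 1"
    using U.coeff_1_0_1_mult_eq_1 D.coeff_1_0_1_mult_eq_1 by auto
  then show "P 1 0 1 \<noteq> 0" "D 1 0 1 \<noteq> 0" by auto
qed

lemma identity1_coeff:
  assumes "j < n" "l < n"
  shows "(\<Sum>s\<le>j. P 1 s 1 * (\<Sum>c<n. D l (j - s) c * P 1 c 1))
    = (\<Sum>s\<le>l. P 1 (l - s) 1 * (\<Sum>c<n. P j s c * P 1 c 1))"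
proof -
  have "1 < n" using two_le_n by simp
  with reg_qcycle assms
  have identity: "(\<Sum>s\<le>j. bil n P (bil n P (bvec 1) (bvec s)) (bil n D (bvec l) (bvec (j - s))))
      = (\<Sum>s\<le>l. bil n P (bil n P (bvec 1) (bvec (l - s))) (bil n P (bvec j) (bvec s)))"
    unfolding reg_qcycle_def by blast
  note apply_1 = P.bil_bil_apply_1[OF coeff_1_0_1_ne_0(1)]
  have "(\<Sum>s\<le>j. P 1 s 1 * (\<Sum>c<n. D l (j - s) c * P 1 c 1))
      = (\<Sum>s\<le>j. bil n P (bil n P (bvec 1) (bvec s)) (bil n D (bvec l) (bvec (j - s))) 1)"
    by (rule sum.cong) (use assms apply_1 in auto)
  also have "\<dots> = (\<Sum>s\<le>l. bil n P (bil n P (bvec 1) (bvec (l - s))) (bil n P (bvec j) (bvec s)) 1)"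
    using arg_cong[where f = "\<lambda>g. g 1", OF identity] by (simp only: sum_apply)
  also have "\<dots> = (\<Sum>s\<le>l. P 1 (l - s) 1 * (\<Sum>c<n. P j s c * P 1 c 1))"
    by (rule sum.cong) (use assms apply_1 in auto)
  finally show ?thesis .
qed

lemma identity3_coeff:
  assumes "j < n"
  shows "(\<Sum>s\<le>j. D 1 s 1 * (\<Sum>c<n. D 1 (j - s) c * D 1 c 1))
    = (\<Sum>s\<le>1. D 1 (1 - s) 1 * (\<Sum>c<n. P j s c * D 1 c 1))"
proof -
  have "1 < n" using two_le_n by simp
  with reg_qcycle assms
  have identity: "(\<Sum>s\<le>j. bil n D (bil n D (bvec 1) (bvec s)) (bil n D (bvec 1) (bvec (j - s))))
      = (\<Sum>s\<le>1. bil n D (bil n D (bvec 1) (bvec (1 - s))) (bil n P (bvec j) (bvec s)))"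
    unfolding reg_qcycle_def by blast
  note apply_1 = D.bil_bil_apply_1[OF coeff_1_0_1_ne_0(2)]
  have "(\<Sum>s\<le>j. D 1 s 1 * (\<Sum>c<n. D 1 (j - s) c * D 1 c 1))
      = (\<Sum>s\<le>j. bil n D (bil n D (bvec 1) (bvec s)) (bil n D (bvec 1) (bvec (j - s))) 1)"
    by (rule sum.cong) (use assms \<open>1 < n\<close> apply_1 in auto)
  also have "\<dots> = (\<Sum>s\<le>1. bil n D (bil n D (bvec 1) (bvec (1 - s))) (bil n P (bvec j) (bvec s)) 1)"
    using arg_cong[where f = "\<lambda>g. g 1", OF identity] by (simp only: sum_apply)
  also have "\<dots> = (\<Sum>s\<le>1. D 1 (1 - s) 1 * (\<Sum>c<n. P j s c * D 1 c 1))"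
    by (rule sum.cong) (use assms \<open>1 < n\<close> apply_1 in auto)
  finally show ?thesis .
qed

context
  assumes P_1_1_1_ne_0: "P 1 1 1 \<noteq> 0"
begin

lemma P_coeff_j_0_1: "j < n \<Longrightarrow> P j 0 1 = (if j = 1 then 1 else 0)"
proof (rule P.coeff_j_0_1_if_fixed[of "\<lambda>c. P 1 c 1"])
  show "\<forall>j<n. P 1 j 1 = (\<Sum>c<n. P j 0 c * P 1 c 1)"
  proof (intro allI impI)
    fix j assume "j < n"
    have "(\<Sum>s\<le>j. P 1 s 1 * (\<Sum>c<n. D 0 (j - s) c * P 1 c 1)) = P 1 j 1 * P 1 0 1"
      by (subst sum_eq_single[where a = j])
        (use D.sum_coeff_0_j[OF coeff_1_0_1_ne_0(2)] \<open>j < n\<close> in auto)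
    then show "P 1 j 1 = (\<Sum>c<n. P j 0 c * P 1 c 1)"
      using identity1_coeff[of j 0] \<open>j < n\<close> two_le_n coeff_1_0_1_ne_0(1) by (simp add: mult.commute)
  qed
qed (rule P_1_1_1_ne_0)

lemma D_1_0_1_eq_1: "D 1 0 1 = 1"
proof (rule D.coeff_1_0_1_eq_1_if_fixed[of "\<lambda>c. P 1 c 1"])
  show "\<forall>l<n. P 1 l 1 = (\<Sum>c<n. D l 0 c * P 1 c 1)"
  proof (intro allI impI)
    fix l assume "l < n"
    have "(\<Sum>s\<le>l. P 1 (l - s) 1 * (\<Sum>c<n. P 0 s c * P 1 c 1)) = P 1 l 1 * P 1 0 1"
      by (subst sum_eq_single[where a = 0])
        (use P.sum_coeff_0_j[OF coeff_1_0_1_ne_0(1)] \<open>l < n\<close> in auto)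
    then show "P 1 l 1 = (\<Sum>c<n. D l 0 c * P 1 c 1)"
      using identity1_coeff[of 0 l] \<open>l < n\<close> two_le_n coeff_1_0_1_ne_0(1) by (simp add: mult.commute)
  qed
qed (rule P_1_1_1_ne_0)

lemma series_riccati_congruence:
  assumes "X 0 = 1" "j < n"
    and identity: "(\<Sum>s\<le>j. X s * (\<Sum>c<n. D 1 (j - s) c * X c))
      = (\<Sum>s\<le>1. X (1 - s) * (\<Sum>c<n. P j s c * X c))"
  shows "X 1 * (Abs_fps X * series_1r D) $ j = X 1 * X j + (fps_deriv (Abs_fps X) * series_r1 P) $ j"
proof -
  have "(\<Sum>s\<le>j. X s * (\<Sum>c<n. D 1 (j - s) c * X c)) = X 1 * (Abs_fps X * series_1r D) $ j"
    using D.sum_coeff_1_j[OF coeff_1_0_1_ne_0(2)] \<open>j < n\<close>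
    by (simp add: fps_mult_nth series_1r_def atLeast0AtMost sum_distrib_left algebra_simps)
  moreover have "(\<Sum>s\<le>1. X (1 - s) * (\<Sum>c<n. P j s c * X c))
      = X 1 * X j + (fps_deriv (Abs_fps X) * series_r1 P) $ j"
    using P.sum_coeff_j_0[OF P_coeff_j_0_1] P.sum_coeff_j_1[OF P_coeff_j_0_1] assms
    by (simp add: sum_atMost_1)
  ultimately show ?thesis using identity by simp
qed

lemma D_1_r_1_eq_P_1_r_1: "r < n \<Longrightarrow> D 1 r 1 = P 1 r 1"
proof -
  have "P 1 0 1 = 1" using P_coeff_j_0_1[of 1] two_le_n by simp
  have "P 0 1 1 = 0" using P.coeff_0_j_1_eq_0[OF coeff_1_0_1_ne_0(1), of 1] two_le_n by simp
  have P: "P 1 1 1 * (series_1r P * series_1r D) $ j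
      = P 1 1 1 * series_1r P $ j + (fps_deriv (series_1r P) * series_r1 P) $ j" if "j < n" for j
    using series_riccati_congruence[of "\<lambda>r. P 1 r 1" j] identity1_coeff[of j 1] \<open>P 1 0 1 = 1\<close> that two_le_n
    by (simp add: series_1r_def)
  have D: "D 1 1 1 * (series_1r D * series_1r D) $ j
      = D 1 1 1 * series_1r D $ j + (fps_deriv (series_1r D) * series_r1 P) $ j" if "j < n" for j
    using series_riccati_congruence[of "\<lambda>r. D 1 r 1" j] identity3_coeff[of j] D_1_0_1_eq_1 that
    by (simp add: series_1r_def)
  have "P 1 1 1 * (D 1 1 1 + P 1 1 1) = P 1 1 1 * P 1 1 1 + P 1 1 1 * P 1 1 1"
    using P[of 1] two_le_n \<open>P 1 0 1 = 1\<close> \<open>P 0 1 1 = 0\<close> D_1_0_1_eq_1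
    by (simp add: fps_mult_nth series_1r_def series_r1_def)
  then have "D 1 1 1 = P 1 1 1" using P_1_1_1_ne_0 by (simp add: algebra_simps)
  then show "r < n \<Longrightarrow> D 1 r 1 = P 1 r 1"
    using fps_nth_eq_if_riccati_congruent[of "series_1r P" "series_1r D" "series_r1 P" n r] P D
      \<open>P 1 0 1 = 1\<close> D_1_0_1_eq_1 \<open>P 0 1 1 = 0\<close> P_1_1_1_ne_0
    by (simp add: series_1r_def series_r1_def)
qed

end

end

theorem proposition4p3:
  fixes n :: nat and P D :: "nat \<Rightarrow> nat \<Rightarrow> nat \<Rightarrow> 'a::field_char_0"
  assumes "alg_closed TYPE('a)"
    and "n \<ge> 2"
    and "reg_qcycle n P D"
    and "P 1 1 1 \<noteq> 0"
  shows "\<forall>r<n. D 1 r 1 = P 1 r 1"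
proof -
  interpret reg_qcycle_coalgebra n P D
    using assms(2,3) by unfold_locales
  show ?thesis using D_1_r_1_eq_P_1_r_1[OF assms(4)] by blast
qed

end
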